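(* Let $C=(1,c_2,c_3,c_4,c_5,c_6)=(1,c_2,2c_2,c_4,c_2+c_4,2c_4)$ be a system with $c_4\ge 3c_2-1$ and $c_4\ne 3c_2$, and let $\ell=\lceil c_5/c_3\rceil$. Suppose $\mathrm{grd}_C(\ell c_3)=\ell c_3-c_5+1-\lfloor(\ell c_3-c_5)/c_2\rfloor(c_2-1)$ and $\mathrm{grd}_C(\ell c_3)\le\ell$. Then $C$ is canonical and the subsystem $(1,c_2,2c_2,c_4,c_2+c_4)$ is noncanonical.
   Context: A system is a tuple $C=(c_1,\dots,c_n)$ of integers with $1=c_1<c_2<\dots<c_n$; for $k\le n$, $(c_1,\dots,c_k)$ is a subsystem. For a positive integer $v$, $\mathrm{opt}_C(v)$ is the minimum of $\sum_i x_i$ over $x\in\mathbb{Z}_{\ge0}^n$ with $\sum_i c_ix_i=v$. The greedy representation of $v$ is produced by: for $i=n$ down to $1$, while $c_i\le$ remaining value, take a coin $c_i$. $\mathrm{grd}_C(v)$ is its number of coins. A positive integer $w$ is a counterexample if $\mathrm{opt}_C(w)<\mathrm{grd}_C(w)$; $C$ is canonical if it has none, noncanonical otherwise. *)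

theory Defs
  imports Complex_Main
begin

definition coin_system :: "nat list \<Rightarrow> bool" where
  "coin_system C \<longleftrightarrow> C \<noteq> [] \<and> hd C = 1 \<and> sorted_wrt (<) C"

definition opt :: "nat list \<Rightarrow> nat \<Rightarrow> nat" where
  "opt C v = (LEAST k. \<exists>x::nat list. length x = length C \<and> sum_list x = k \<and>
                 (\<Sum>i<length C. C ! i * x ! i) = v)"

text \<open>Greedy on coins listed from largest to smallest: taking coin c while c \<le> remaining
  takes (v div c) coins and leaves (v mod c).\<close>
fun grd_desc :: "nat list \<Rightarrow> nat \<Rightarrow> nat" where
  "grd_desc [] v = 0"
| "grd_desc (c # cs) v = v div c + grd_desc cs (v mod c)"

definition grd :: "nat list \<Rightarrow> nat \<Rightarrow> nat" where
  "grd C v = grd_desc (rev C) v"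

definition counterexample :: "nat list \<Rightarrow> nat \<Rightarrow> bool" where
  "counterexample C w \<longleftrightarrow> 0 < w \<and> opt C w < grd C w"

definition canonical :: "nat list \<Rightarrow> bool" where
  "canonical C \<longleftrightarrow> (\<nexists>w. counterexample C w)"

end

(*
  Let g be the greedy count of the system (1, a, 2a): g(q a + s) = ceil(q/2) + s for s < a, and
  it is optimal for that system.  Write b = p a + t with t < a.  The bound grd(l * 2a) <= l,
  together with 3a <= b + 1, forces t = 0 or a - t <= floor(p/2).  Under this condition adding
  a + b to an amount raises g by at least one and adding b - a never lowers it, so by induction
  on the amount the greedy count of C is at most g(v), 1 + g(v - b) and 1 + g(v - (a+b)).
  Trading pairs of the coins b, a+b for 2b plus at most 2a then bounds the greedy count by the
  size of any representation, so C is canonical.  Without the coin 2b, the amount 2b = b + b is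
  a counterexample: greedy takes a + b and then g(b - a) >= 2 coins, because b <> 3a.
*)
theory Submission
  imports Defs
begin

lemma opt_le_sum_list:
  assumes "length x = length C"
  shows "opt C (\<Sum>i<length C. C ! i * x ! i) \<le> sum_list x"
  unfolding opt_def using assms by (intro Least_le) blast

lemma opt_attained:
  assumes "C \<noteq> []" "hd C = 1"
  obtains x where "length x = length C" "sum_list x = opt C v"
    "(\<Sum>i<length C. C ! i * x ! i) = v"
proof -
  obtain m where m: "length C = Suc m"
    using assms(1) by (cases C) auto
  let ?x = "v # replicate m 0"
  have "(\<Sum>i<length C. C ! i * ?x ! i) = v"
    using assms unfolding m sum.lessThan_Suc_shift by (simp add: hd_conv_nth)
  then have "\<exists>k x. length x = length C \<and> sum_list x = k \<and>
      (\<Sum>i<length C. C ! i * x ! i) = v"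
    by (intro exI[of _ "sum_list ?x"] exI[of _ ?x]) (simp add: m)
  then have "\<exists>x. length x = length C \<and> sum_list x = opt C v \<and>
      (\<Sum>i<length C. C ! i * x ! i) = v"
    unfolding opt_def by (rule LeastI_ex)
  then show thesis
    using that by blast
qed

lemma canonicalI:
  assumes "C \<noteq> []" "hd C = 1"
    and "\<And>x w. length x = length C \<Longrightarrow> (\<Sum>i<length C. C ! i * x ! i) = w \<Longrightarrow>
      grd C w \<le> sum_list x"
  shows "canonical C"
  unfolding canonical_def counterexample_def
proof clarify
  fix w
  assume "opt C w < grd C w"
  moreover obtain x where "length x = length C" "sum_list x = opt C w"
    "(\<Sum>i<length C. C ! i * x ! i) = w"
    using opt_attained assms(1,2) .
  ultimately show False
    using assms(3) by (metis not_le)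
qed

lemma not_canonicalI:
  assumes "length x = length C" "(\<Sum>i<length C. C ! i * x ! i) = w"
    and "0 < w" "sum_list x < grd C w"
  shows "\<not> canonical C"
  unfolding canonical_def counterexample_def
  using assms opt_le_sum_list[OF assms(1)] le_less_trans by blast

lemma grd_snoc: "grd (C @ [c]) v = v div c + grd C (v mod c)"
  by (simp add: grd_def)

lemma grd_1_a_2a_eq:
  assumes "0 < a"
  shows "grd [1, a, 2*a] x = (x div a + 1) div 2 + x mod a"
proof -
  have "x mod (a * 2) = a * (x div a mod 2) + x mod a"
    by (rule mod_mult2_eq)
  then have "x mod (2 * a) div a = x div a mod 2"
    using assms by (simp add: mult.commute)
  moreover have "x div (2 * a) = x div a div 2"
    by (simp add: div_mult2_eq mult.commute)
  moreover have "x mod (2 * a) mod a = x mod a"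
    by (simp add: mod_mod_cancel)
  moreover have "n div 2 + n mod 2 = (n + 1) div 2" for n :: nat
    by presburger
  ultimately show ?thesis
    by (simp add: grd_def)
qed

lemma grd_1_a_2a_mult_add:
  assumes "0 < a" "s < a"
  shows "grd [1, a, 2*a] (q*a + s) = (q + 1) div 2 + s"
  using assms unfolding grd_1_a_2a_eq[OF assms(1)] by simp

lemma grd_1_a_2a_add_mult:
  assumes "0 < a"
  shows "grd [1, a, 2*a] x \<le> grd [1, a, 2*a] (x + j*a)"
    and "grd [1, a, 2*a] (x + j*a) \<le> grd [1, a, 2*a] x + (j + 1) div 2"
proof -
  have "(x + j*a) div a = x div a + j" "(x + j*a) mod a = x mod a"
    using assms by simp_all
  moreover have "(q + 1) div 2 \<le> (q + j + 1) div 2"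
    and "(q + j + 1) div 2 \<le> (q + 1) div 2 + (j + 1) div 2" for q :: nat
    by presburger+
  ultimately show "grd [1, a, 2*a] x \<le> grd [1, a, 2*a] (x + j*a)"
    and "grd [1, a, 2*a] (x + j*a) \<le> grd [1, a, 2*a] x + (j + 1) div 2"
    unfolding grd_1_a_2a_eq[OF assms] by (simp_all add: add.assoc)
qed

lemma grd_1_a_2a_le_coins:
  assumes "0 < a"
  shows "grd [1, a, 2*a] (n1 + a*n2 + 2*a*n3) \<le> n1 + n2 + n3"
proof -
  define k s where "k = n1 div a" and "s = n1 mod a"
  have n1: "n1 = k*a + s" and "s < a"
    using assms by (simp_all add: k_def s_def)
  have "n1 + a*n2 + 2*a*n3 = (n2 + 2*n3 + k)*a + s"
    by (simp add: n1 algebra_simps)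
  then have "grd [1, a, 2*a] (n1 + a*n2 + 2*a*n3) = (n2 + 2*n3 + k + 1) div 2 + s"
    using grd_1_a_2a_mult_add[OF assms \<open>s < a\<close>] by simp
  moreover have "(n2 + 2*n3 + k + 1) div 2 \<le> n2 + n3 + k"
    by presburger
  moreover have "k \<le> k*a"
    using assms by simp
  ultimately show ?thesis
    unfolding n1 by linarith
qed

lemma grd_1_a_2a_add_ge:
  assumes "0 < a" "t < a" "k \<le> m div 2" "t = 0 \<or> a + k \<le> t + (m + 1) div 2"
  shows "grd [1, a, 2*a] y + k \<le> grd [1, a, 2*a] (y + (m*a + t))"
proof -
  define q s where "q = y div a" and "s = y mod a"
  have y: "y = q*a + s" and "s < a"
    using assms(1) by (simp_all add: q_def s_def)
  then have grd_y: "grd [1, a, 2*a] y = (q + 1) div 2 + s"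
    using assms(1) grd_1_a_2a_mult_add by blast
  show ?thesis
  proof (cases "s + t < a")
    case True
    have eq: "y + (m*a + t) = (q + m)*a + (s + t)"
      by (simp add: y algebra_simps)
    have "grd [1, a, 2*a] (y + (m*a + t)) = (q + m + 1) div 2 + (s + t)"
      unfolding eq by (rule grd_1_a_2a_mult_add[OF assms(1) True])
    moreover have "(q + 1) div 2 + m div 2 \<le> (q + m + 1) div 2"
      by presburger
    ultimately show ?thesis
      using grd_y assms(3) by linarith
  next
    case False
    have eq: "y + (m*a + t) = (q + m + 1)*a + (s + t - a)"
      using False by (simp add: y algebra_simps)
    have "s + t - a < a"
      using \<open>s < a\<close> assms(2) by linarith
    then have "grd [1, a, 2*a] (y + (m*a + t)) = (q + m + 1 + 1) div 2 + (s + t - a)"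
      unfolding eq by (rule grd_1_a_2a_mult_add[OF assms(1)])
    moreover have "(q + 1) div 2 + (m + 1) div 2 \<le> (q + m + 2) div 2"
      by presburger
    moreover have "a + k \<le> t + (m + 1) div 2"
      using assms(4) False \<open>s < a\<close> by auto
    ultimately show ?thesis
      using grd_y False by linarith
  qed
qed

lemma grd_1_a_2a_b_ab_2b_sub_2b:
  assumes "0 < b" "2*b \<le> v"
  shows "grd [1, a, 2*a, b, a+b, 2*b] v = 1 + grd [1, a, 2*a, b, a+b, 2*b] (v - 2*b)"
proof -
  have "v div (2*b) = 1 + (v - 2*b) div (2*b)" "v mod (2*b) = (v - 2*b) mod (2*b)"
    using assms by (simp_all add: le_div_geq le_mod_geq)
  then show ?thesis
    using grd_snoc[of "[1, a, 2*a, b, a+b]" "2*b"] by simp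
qed

lemma grd_1_a_2a_b_ab_2b_less_2b:
  assumes "v < 2*b"
  shows "grd [1, a, 2*a, b, a+b, 2*b] v = grd [1, a, 2*a, b, a+b] v"
  using assms grd_snoc[of "[1, a, 2*a, b, a+b]" "2*b"] by simp

lemma grd_1_a_2a_b_ab_less_b:
  assumes "v < b"
  shows "grd [1, a, 2*a, b, a+b] v = grd [1, a, 2*a] v"
  using assms grd_snoc[of "[1, a, 2*a, b]" "a+b"] grd_snoc[of "[1, a, 2*a]" b] by simp

lemma grd_1_a_2a_b_ab_b_le:
  assumes "b \<le> v" "v < a + b" "a \<le> b"
  shows "grd [1, a, 2*a, b, a+b] v = 1 + grd [1, a, 2*a] (v - b)"
proof -
  have "v div b = 1" "v mod b = v - b"
    using assms by (simp_all add: le_div_geq le_mod_geq)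
  then show ?thesis
    using assms grd_snoc[of "[1, a, 2*a, b]" "a+b"] grd_snoc[of "[1, a, 2*a]" b] by simp
qed

lemma grd_1_a_2a_b_ab_a_plus_b_le:
  assumes "a + b \<le> v" "v < a + 2*b"
  shows "grd [1, a, 2*a, b, a+b] v = 1 + grd [1, a, 2*a] (v - (a+b))"
proof -
  have "v div (a+b) = 1" "v mod (a+b) = v - (a+b)"
    using assms by (simp_all add: le_div_geq le_mod_geq)
  then show ?thesis
    using assms grd_snoc[of "[1, a, 2*a, b]" "a+b"] grd_snoc[of "[1, a, 2*a]" b] by simp
qed

context
  fixes a b :: nat
  assumes a_pos: "0 < a" and double_a_less: "2*a < b"
    and b_mod_a: "b mod a = 0 \<or> a \<le> b mod a + b div a div 2"
begin

lemma decompose_b: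
  obtains p t where "b = p*a + t" "t < a" "2 \<le> p" "t = 0 \<or> a \<le> t + p div 2"
proof
  show "b = b div a * a + b mod a" "b mod a < a"
    using a_pos by simp_all
  show "2 \<le> b div a"
    using div_le_mono[of "2*a" b a] double_a_less a_pos by simp
  show "b mod a = 0 \<or> a \<le> b mod a + b div a div 2"
    by (rule b_mod_a)
qed

lemma grd_1_a_2a_add_a_plus_b: "1 + grd [1, a, 2*a] y \<le> grd [1, a, 2*a] (y + (a+b))"
proof -
  obtain p t where b: "b = p*a + t" and "t < a" "2 \<le> p" "t = 0 \<or> a \<le> t + p div 2"
    by (rule decompose_b)
  then have "grd [1, a, 2*a] y + 1 \<le> grd [1, a, 2*a] (y + ((p + 1)*a + t))"
    by (intro grd_1_a_2a_add_ge a_pos) presburger+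
  then show ?thesis
    by (simp add: b algebra_simps)
qed

lemma grd_1_a_2a_add_b_minus_a: "grd [1, a, 2*a] y \<le> grd [1, a, 2*a] (y + (b - a))"
proof -
  obtain p t where b: "b = p*a + t" and "t < a" "2 \<le> p" "t = 0 \<or> a \<le> t + p div 2"
    by (rule decompose_b)
  then have "grd [1, a, 2*a] y + 0 \<le> grd [1, a, 2*a] (y + ((p - 1)*a + t))"
    by (intro grd_1_a_2a_add_ge a_pos) simp_all
  moreover have "b - a = (p - 1)*a + t"
    using b \<open>2 \<le> p\<close> by (simp add: diff_mult_distrib)
  ultimately show ?thesis
    by simp
qed

lemma grd_1_a_2a_add_b:
  assumes "y < a"
  shows "1 + grd [1, a, 2*a] y \<le> grd [1, a, 2*a] (y + b)"
proof -
  obtain p t where b: "b = p*a + t" and "t < a" "2 \<le> p" and K: "t = 0 \<or> a \<le> t + p div 2"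
    by (rule decompose_b)
  have grd_y: "grd [1, a, 2*a] y = y"
    using grd_1_a_2a_mult_add[OF a_pos assms, of 0] by simp
  show ?thesis
  proof (cases "y + t < a")
    case True
    have "grd [1, a, 2*a] (y + b) = (p + 1) div 2 + (y + t)"
      using grd_1_a_2a_mult_add[OF a_pos True, of p] by (simp add: b algebra_simps)
    moreover have "1 \<le> (p + 1) div 2"
      using \<open>2 \<le> p\<close> by presburger
    ultimately show ?thesis
      using grd_y by linarith
  next
    case False
    have "y + t - a < a"
      using assms \<open>t < a\<close> by linarith
    have eq: "y + b = (p + 1)*a + (y + t - a)"
      using False by (simp add: b algebra_simps)
    have "grd [1, a, 2*a] (y + b) = (p + 1 + 1) div 2 + (y + t - a)"
      unfolding eq by (rule grd_1_a_2a_mult_add[OF a_pos \<open>y + t - a < a\<close>])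
    moreover have "a \<le> t + p div 2"
      using K False assms by auto
    ultimately show ?thesis
      using grd_y False by linarith
  qed
qed

lemma grd_1_a_2a_b_ab_2b_le_grd_1_a_2a: "grd [1, a, 2*a, b, a+b, 2*b] v \<le> grd [1, a, 2*a] v"
proof (induction v rule: less_induct)
  case (less v)
  consider "v < b" | "b \<le> v" "v < a + b" | "a + b \<le> v" "v < 2*b" | "2*b \<le> v"
    by linarith
  then show ?case
  proof cases
    case 1
    then show ?thesis
      using grd_1_a_2a_b_ab_2b_less_2b grd_1_a_2a_b_ab_less_b by simp
  next
    case 2
    then have "grd [1, a, 2*a, b, a+b, 2*b] v = 1 + grd [1, a, 2*a] (v - b)"
      using double_a_less grd_1_a_2a_b_ab_2b_less_2b grd_1_a_2a_b_ab_b_le by simp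
    also have "\<dots> \<le> grd [1, a, 2*a] (v - b + b)"
      using 2 by (intro grd_1_a_2a_add_b) simp
    finally show ?thesis
      using 2 by simp
  next
    case 3
    then have "grd [1, a, 2*a, b, a+b, 2*b] v = 1 + grd [1, a, 2*a] (v - (a+b))"
      using grd_1_a_2a_b_ab_2b_less_2b grd_1_a_2a_b_ab_a_plus_b_le by simp
    also have "\<dots> \<le> grd [1, a, 2*a] (v - (a+b) + (a+b))"
      by (rule grd_1_a_2a_add_a_plus_b)
    finally show ?thesis
      using 3 by simp
  next
    case 4
    then have "grd [1, a, 2*a, b, a+b, 2*b] v = 1 + grd [1, a, 2*a, b, a+b, 2*b] (v - 2*b)"
      using double_a_less by (intro grd_1_a_2a_b_ab_2b_sub_2b) simp_all
    also have "\<dots> \<le> 1 + grd [1, a, 2*a] (v - 2*b)"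
      using less double_a_less 4 by simp
    also have "\<dots> \<le> 1 + grd [1, a, 2*a] (v - 2*b + (b - a))"
      using grd_1_a_2a_add_b_minus_a by simp
    also have "\<dots> \<le> grd [1, a, 2*a] (v - 2*b + (b - a) + (a+b))"
      by (rule grd_1_a_2a_add_a_plus_b)
    finally show ?thesis
      using 4 double_a_less by (simp add: algebra_simps)
  qed
qed

lemma grd_1_a_2a_b_ab_2b_le_sub_a_plus_b:
  assumes "a + b \<le> v"
  shows "grd [1, a, 2*a, b, a+b, 2*b] v \<le> 1 + grd [1, a, 2*a] (v - (a+b))"
proof (cases "v < 2*b")
  case True
  then show ?thesis
    using assms grd_1_a_2a_b_ab_2b_less_2b grd_1_a_2a_b_ab_a_plus_b_le by simp
next
  case False
  then have "grd [1, a, 2*a, b, a+b, 2*b] v = 1 + grd [1, a, 2*a, b, a+b, 2*b] (v - 2*b)"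
    using double_a_less by (intro grd_1_a_2a_b_ab_2b_sub_2b) simp_all
  also have "\<dots> \<le> 1 + grd [1, a, 2*a] (v - 2*b)"
    using grd_1_a_2a_b_ab_2b_le_grd_1_a_2a by simp
  also have "\<dots> \<le> 1 + grd [1, a, 2*a] (v - 2*b + (b - a))"
    using grd_1_a_2a_add_b_minus_a by simp
  finally show ?thesis
    using False double_a_less by (simp add: algebra_simps)
qed

lemma grd_1_a_2a_b_ab_2b_le_sub_b:
  assumes "b \<le> v"
  shows "grd [1, a, 2*a, b, a+b, 2*b] v \<le> 1 + grd [1, a, 2*a] (v - b)"
proof (cases "v < a + b")
  case True
  then show ?thesis
    using assms double_a_less grd_1_a_2a_b_ab_2b_less_2b grd_1_a_2a_b_ab_b_le by simp
next
  case False
  then have "grd [1, a, 2*a, b, a+b, 2*b] v \<le> 1 + grd [1, a, 2*a] (v - (a+b))"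
    by (intro grd_1_a_2a_b_ab_2b_le_sub_a_plus_b) simp
  also have "\<dots> \<le> 1 + grd [1, a, 2*a] (v - (a+b) + 1*a)"
    using grd_1_a_2a_add_mult(1)[OF a_pos, of _ 1] by (simp only: add_le_cancel_left)
  finally show ?thesis
    using False by (simp add: algebra_simps)
qed

lemma grd_1_a_2a_b_ab_2b_le_coins_b_ab:
  assumes "b*n4 + (a+b)*n5 \<le> v"
  shows "grd [1, a, 2*a, b, a+b, 2*b] v \<le> n4 + n5 + grd [1, a, 2*a] (v - (b*n4 + (a+b)*n5))"
  using assms
proof (induction "n4 + n5" arbitrary: v n4 n5 rule: less_induct)
  case less
  show ?case
  proof (cases "2 \<le> n4 + n5")
    case False
    then consider "n4 = 0" "n5 = 0" | "n4 = 1" "n5 = 0" | "n4 = 0" "n5 = 1"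
      by linarith
    then show ?thesis
      using less.prems grd_1_a_2a_b_ab_2b_le_grd_1_a_2a grd_1_a_2a_b_ab_2b_le_sub_b
        grd_1_a_2a_b_ab_2b_le_sub_a_plus_b
      by cases simp_all
  next
    case True
    \<comment> \<open>Trade i coins b and j coins a+b (i + j = 2) for 2b plus j a;
      the j a cost the (1, a, 2a)-greedy at most one coin.\<close>
    define i j where "i = min n4 2" and "j = 2 - min n4 2"
    have "i + j = 2"
      by (simp add: i_def j_def)
    moreover have "i \<le> n4" "j \<le> n5"
      using True by (simp_all add: i_def j_def)
    ultimately obtain n4' n5' where n4: "n4 = n4' + i" and n5: "n5 = n5' + j"
      by (metis le_add_diff_inverse2)
    have "b*i + (a+b)*j = b*(i + j) + j*a"
      by (simp add: algebra_simps)
    then have B: "b*n4 + (a+b)*n5 = (b*n4' + (a+b)*n5') + 2*b + j*a"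
      unfolding n4 n5 \<open>i + j = 2\<close> by (simp add: algebra_simps)
    have "grd [1, a, 2*a, b, a+b, 2*b] v = 1 + grd [1, a, 2*a, b, a+b, 2*b] (v - 2*b)"
      using less.prems B double_a_less by (intro grd_1_a_2a_b_ab_2b_sub_2b) simp_all
    also have "\<dots> \<le> 1 + (n4' + n5' + grd [1, a, 2*a] (v - 2*b - (b*n4' + (a+b)*n5')))"
      using less.hyps[of n4' n5' "v - 2*b"] less.prems B \<open>i + j = 2\<close> n4 n5 by simp
    also have "v - 2*b - (b*n4' + (a+b)*n5') = (v - (b*n4 + (a+b)*n5)) + j*a"
      using less.prems B by simp
    also have "grd [1, a, 2*a] \<dots> \<le> grd [1, a, 2*a] (v - (b*n4 + (a+b)*n5)) + 1"
    proof -
      have "(j + 1) div 2 \<le> 1"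
        using \<open>i + j = 2\<close> by presburger
      then show ?thesis
        using grd_1_a_2a_add_mult(2)[OF a_pos, of "v - (b*n4 + (a+b)*n5)" j] by linarith
    qed
    finally show ?thesis
      using n4 n5 \<open>i + j = 2\<close> by linarith
  qed
qed

lemma grd_1_a_2a_b_ab_2b_le_coins:
  assumes "b*n4 + (a+b)*n5 + 2*b*n6 \<le> v"
  shows "grd [1, a, 2*a, b, a+b, 2*b] v
    \<le> n4 + n5 + n6 + grd [1, a, 2*a] (v - (b*n4 + (a+b)*n5 + 2*b*n6))"
  using assms
proof (induction n6 arbitrary: v)
  case 0
  then show ?case
    using grd_1_a_2a_b_ab_2b_le_coins_b_ab by simp
next
  case (Suc n6)
  have "grd [1, a, 2*a, b, a+b, 2*b] v = 1 + grd [1, a, 2*a, b, a+b, 2*b] (v - 2*b)"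
    using Suc.prems double_a_less by (intro grd_1_a_2a_b_ab_2b_sub_2b) simp_all
  also have "\<dots> \<le> 1 + (n4 + n5 + n6 +
      grd [1, a, 2*a] (v - 2*b - (b*n4 + (a+b)*n5 + 2*b*n6)))"
    using Suc.prems by (simp only: add_le_cancel_left) (rule Suc.IH, simp)
  finally show ?case
    by (simp add: algebra_simps)
qed

theorem canonical_1_a_2a_b_ab_2b: "canonical [1, a, 2*a, b, a+b, 2*b]"
proof (rule canonicalI)
  fix x :: "nat list" and w
  assume "length x = length [1, a, 2*a, b, a+b, 2*b]"
    and w: "(\<Sum>i<length [1, a, 2*a, b, a+b, 2*b]. [1, a, 2*a, b, a+b, 2*b] ! i * x ! i) = w"
  then obtain n1 n2 n3 n4 n5 n6 where x: "x = [n1, n2, n3, n4, n5, n6]"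
    by (auto simp: length_Suc_conv eval_nat_numeral)
  have "w = (n1 + a*n2 + 2*a*n3) + (b*n4 + (a+b)*n5 + 2*b*n6)"
    using w by (simp add: x eval_nat_numeral)
  then have "grd [1, a, 2*a, b, a+b, 2*b] w
      \<le> n4 + n5 + n6 + grd [1, a, 2*a] (n1 + a*n2 + 2*a*n3)"
    using grd_1_a_2a_b_ab_2b_le_coins[of n4 n5 n6 w] by simp
  also have "\<dots> \<le> sum_list x"
    using grd_1_a_2a_le_coins[OF a_pos, of n1 n2 n3] by (simp add: x)
  finally show "grd [1, a, 2*a, b, a+b, 2*b] w \<le> sum_list x" .
qed simp_all

end

lemma not_canonical_1_a_2a_b_ab:
  assumes "0 < a" "2*a < b" "b \<noteq> 3*a"
  shows "\<not> canonical [1, a, 2*a, b, a+b]"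
proof -
  define p t where "p = b div a" and "t = b mod a"
  have b: "b = p*a + t" and "t < a"
    using assms(1) by (simp_all add: p_def t_def)
  have "2 \<le> p"
    using div_le_mono[of "2*a" b a] assms(1,2) by (simp add: p_def)
  have eq: "b - a = (p - 1)*a + t"
    using b \<open>2 \<le> p\<close> by (simp add: diff_mult_distrib)
  have "grd [1, a, 2*a] (b - a) = (p - 1 + 1) div 2 + t"
    unfolding eq by (rule grd_1_a_2a_mult_add[OF assms(1) \<open>t < a\<close>])
  moreover have "2 \<le> (p - 1 + 1) div 2 + t"
  proof (cases "t = 0")
    case True
    then have "p \<noteq> 2" "p \<noteq> 3"
      using assms(2,3) b by auto
    then show ?thesis
      using True \<open>2 \<le> p\<close> by presburger
  next
    case False
    then show ?thesis
      using \<open>2 \<le> p\<close> by presburger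
  qed
  moreover have "grd [1, a, 2*a, b, a+b] (2*b) = 1 + grd [1, a, 2*a] (b - a)"
    using assms(1,2) grd_1_a_2a_b_ab_a_plus_b_le[of a b "2*b"] by simp
  ultimately have "2 < grd [1, a, 2*a, b, a+b] (2*b)"
    by linarith
  moreover have
    "(\<Sum>i<length [1, a, 2*a, b, a+b]. [1, a, 2*a, b, a+b] ! i * [0, 0, 0, 2, 0] ! i) = 2*b"
    by (simp add: eval_nat_numeral)
  ultimately show ?thesis
    using assms(2) by (intro not_canonicalI[where x = "[0, 0, 0, 2, 0]" and w = "2*b"]) simp_all
qed

lemma b_mod_a_condition_if_grd_le:
  assumes "0 < a" "2*a < b" "3*a \<le> b + 1"
    and "a + b \<le> l*(2*a)" "l*(2*a) < 3*a + b"
    and "grd [1, a, 2*a, b, a+b, 2*b] (l*(2*a)) \<le> l"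
  shows "b mod a = 0 \<or> a \<le> b mod a + b div a div 2"
proof -
  define p t where "p = b div a" and "t = b mod a"
  have b: "b = p*a + t" and "t < a"
    using assms(1) by (simp_all add: p_def t_def)
  consider "t = 0" | "b < 3*a" | "3*a < b" "0 < t"
    unfolding t_def by (cases "b = 3*a") (auto simp: linorder_neq_iff)
  then have "t = 0 \<or> a \<le> t + p div 2"
  proof cases
    case 1
    then show ?thesis
      by simp
  next
    case 2
    have "p*a < 3*a" "2*a < (p + 1)*a"
      using b 2 assms(2) \<open>t < a\<close> unfolding distrib_right by linarith+
    then have "p = 2"
      by (simp only: mult_less_cancel2) linarith
    then show ?thesis
      using b assms(3) by simp
  next
    case 3
    have "(p + 1)*a < (2*l)*a" "(2*l)*a < (p + 4)*a"
      using assms(4,5) b 3 \<open>t < a\<close> by (simp_all add: algebra_simps)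
    then have "p + 1 < 2*l" "2*l < p + 4"
      by (simp_all only: mult_less_cancel2)
    then obtain e where "e \<le> 1" and l: "2*l = p + 2 + e"
      by (intro that[of "2*l - (p + 2)"]) simp_all
    have "grd [1, a, 2*a, b, a+b, 2*b] (l*(2*a)) = 1 + grd [1, a, 2*a] (l*(2*a) - (a+b))"
      using assms(4,5) 3 grd_1_a_2a_b_ab_2b_less_2b grd_1_a_2a_b_ab_a_plus_b_le by simp
    also have "l*(2*a) - (a+b) = e*a + (a - t)"
    proof -
      have "l*(2*a) = (2*l)*a"
        by simp
      then have "l*(2*a) = (p + 2 + e)*a"
        by (simp only: l)
      then show ?thesis
        using b \<open>t < a\<close> by (simp add: algebra_simps)
    qed
    also have "grd [1, a, 2*a] \<dots> = (e + 1) div 2 + (a - t)"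
      using 3 assms(1) by (intro grd_1_a_2a_mult_add) simp_all
    finally have "1 + ((e + 1) div 2 + (a - t)) \<le> l"
      using assms(6) by simp
    then show ?thesis
      using l \<open>e \<le> 1\<close> by presburger
  qed
  then show ?thesis
    by (simp add: p_def t_def)
qed

lemma nat_ceiling_divide_bounds:
  assumes "0 < n"
  shows "m \<le> nat \<lceil>real m / real n\<rceil> * n"
    and "nat \<lceil>real m / real n\<rceil> * n < m + n"
proof -
  define k where "k = \<lceil>real m / real n\<rceil>"
  have "0 \<le> real m / real n"
    by simp
  then have "0 \<le> k"
    unfolding k_def zero_le_ceiling by linarith
  then have k: "real (nat k * n) = of_int k * real n"
    by simp
  have "real m \<le> real (nat k * n)"
    unfolding k using ceiling_divide_upper[of "real n" "real m"] assms by (simp add: k_def)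
  then show "m \<le> nat \<lceil>real m / real n\<rceil> * n"
    unfolding k_def of_nat_le_iff .
  have "(of_int k - 1) * real n < real m"
    using ceiling_divide_lower[of "real n" "real m"] assms by (simp add: k_def)
  then have "real (nat k * n) < real (m + n)"
    unfolding k by (simp add: left_diff_distrib)
  then show "nat \<lceil>real m / real n\<rceil> * n < m + n"
    unfolding k_def of_nat_less_iff .
qed

theorem lemma13:
  fixes c2 c4 l :: nat
  assumes sys: "coin_system [1, c2, 2*c2, c4, c2+c4, 2*c4]"
    and h1: "3*c2 \<le> c4 + 1"
    and h2: "c4 \<noteq> 3*c2"
    and hl: "l = nat \<lceil>real (c2+c4) / real (2*c2)\<rceil>"
    and hg: "int (grd [1, c2, 2*c2, c4, c2+c4, 2*c4] (l*(2*c2)))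
             = int (l*(2*c2)) - int (c2+c4) + 1
               - \<lfloor>(real (l*(2*c2)) - real (c2+c4)) / real c2\<rfloor> * (int c2 - 1)"
    and hle: "grd [1, c2, 2*c2, c4, c2+c4, 2*c4] (l*(2*c2)) \<le> l"
  shows "canonical [1, c2, 2*c2, c4, c2+c4, 2*c4] \<and> \<not> canonical [1, c2, 2*c2, c4, c2+c4]"
proof -
  have "0 < c2" "2*c2 < c4"
    using sys by (simp_all add: coin_system_def)
  moreover have "c2 + c4 \<le> l*(2*c2)" "l*(2*c2) < 3*c2 + c4"
    using nat_ceiling_divide_bounds[of "2*c2" "c2 + c4"] \<open>0 < c2\<close> by (simp_all add: hl)
  ultimately have "c4 mod c2 = 0 \<or> c2 \<le> c4 mod c2 + c4 div c2 div 2"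
    using h1 hle by (intro b_mod_a_condition_if_grd_le) simp_all
  then show ?thesis
    using canonical_1_a_2a_b_ab_2b[OF \<open>0 < c2\<close> \<open>2*c2 < c4\<close>]
      not_canonical_1_a_2a_b_ab[OF \<open>0 < c2\<close> \<open>2*c2 < c4\<close> h2]
    by simp
qed

end
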